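(* Let $(G,d_G)$ be a countable group with a proper left invariant metric and let $f:\mathbb N\to\mathbb N$ be a function. If every finitely generated subgroup $H$ of $G$ (with the restricted metric) is of growth type at most $f$, then $G$ is of growth type at most $f$.
   Context: A proper left invariant metric on $G$ is $d(g,h)=\|g^{-1}h\|$ for a proper norm ($\|g\|=0$ iff $g=1$, $\|g\|=\|g^{-1}\|$, subadditive, finite balls). For $s>0$, an $s$-scale chain of length $m$ from $x$ to $y$ in a metric space is a sequence $x=x_0,\dots,x_m=y$ with $d(x_i,x_{i+1})<s$. For $g$ in a metric space $X$, $s>0$, $n\in\mathbb N$, let $A_g^{(n,s)}$ be the set of points $h\in X$ joined to $g$ by an $s$-scale chain of length $n$ in $X$, and $gr_{(s,g)}(n)=\#A_g^{(n,s)}$. For functions $u,v$, $u\preceq v$ means there is $C>0$ with $u(x)\le C\,v(Cx)$ for all sufficiently large $x$. $X$ is of growth type at most $f$ if $gr_{(s,g)}\preceq f$ for all $g\in X$, $s>0$. *)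

theory Defs
  imports Complex_Main "HOL-Algebra.Generated_Groups" "HOL-Library.Countable_Set"
begin

text \<open>Proper norm on a group G (HOL-Algebra), inducing the left-invariant metric
  d(g,h) = N(g^-1 h).\<close>
definition proper_norm :: "('a, 'b) monoid_scheme \<Rightarrow> ('a \<Rightarrow> real) \<Rightarrow> bool" where
  "proper_norm G N \<longleftrightarrow>
     (\<forall>g\<in>carrier G. N g = 0 \<longleftrightarrow> g = \<one>\<^bsub>G\<^esub>) \<and>
     (\<forall>g\<in>carrier G. N (inv\<^bsub>G\<^esub> g) = N g) \<and>
     (\<forall>g\<in>carrier G. \<forall>h\<in>carrier G. N (g \<otimes>\<^bsub>G\<^esub> h) \<le> N g + N h) \<and>
     (\<forall>r::real. finite {g \<in> carrier G. N g \<le> r})"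

definition norm_metric :: "('a, 'b) monoid_scheme \<Rightarrow> ('a \<Rightarrow> real) \<Rightarrow> 'a \<Rightarrow> 'a \<Rightarrow> real" where
  "norm_metric G N g h = N (inv\<^bsub>G\<^esub> g \<otimes>\<^bsub>G\<^esub> h)"

definition scale_chain :: "('a \<Rightarrow> 'a \<Rightarrow> real) \<Rightarrow> 'a set \<Rightarrow> real \<Rightarrow> nat \<Rightarrow> 'a \<Rightarrow> 'a \<Rightarrow> bool" where
  "scale_chain d X s m x y \<longleftrightarrow>
     (\<exists>p :: nat \<Rightarrow> 'a. p 0 = x \<and> p m = y \<and> (\<forall>i\<le>m. p i \<in> X) \<and>
        (\<forall>i<m. d (p i) (p (Suc i)) < s))"

definition chain_ball :: "('a \<Rightarrow> 'a \<Rightarrow> real) \<Rightarrow> 'a set \<Rightarrow> real \<Rightarrow> 'a \<Rightarrow> nat \<Rightarrow> 'a set" where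
  "chain_ball d X s g n = {h \<in> X. scale_chain d X s n g h}"

definition gr :: "('a \<Rightarrow> 'a \<Rightarrow> real) \<Rightarrow> 'a set \<Rightarrow> real \<Rightarrow> 'a \<Rightarrow> nat \<Rightarrow> nat" where
  "gr d X s g n = card (chain_ball d X s g n)"

definition dominated :: "(nat \<Rightarrow> nat) \<Rightarrow> (nat \<Rightarrow> nat) \<Rightarrow> bool" where
  "dominated u v \<longleftrightarrow> (\<exists>C::nat. C > 0 \<and> (\<exists>x0. \<forall>x\<ge>x0. u x \<le> C * v (C * x)))"

definition growth_type_at_most :: "('a \<Rightarrow> 'a \<Rightarrow> real) \<Rightarrow> 'a set \<Rightarrow> (nat \<Rightarrow> nat) \<Rightarrow> bool" where
  "growth_type_at_most d X f \<longleftrightarrow> (\<forall>g\<in>X. \<forall>s>0. dominated (gr d X s g) f)"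

end

theory Submission
  imports Defs
begin

text \<open>An \<open>s\<close>-scale chain starting at \<open>g\<close> never leaves the subgroup generated by \<open>g\<close> and the
  finitely many elements of norm below \<open>s\<close>: each step \<open>p i \<mapsto> p (i+1)\<close> is right multiplication
  by such an element. Hence the chain balls of \<open>G\<close> and of that finitely generated subgroup around
  \<open>g\<close> coincide, and so do their growth functions.\<close>

lemma scale_chain_mono:
  assumes "X \<subseteq> Y" and "scale_chain d X s m x y"
  shows "scale_chain d Y s m x y"
  using assms unfolding scale_chain_def by blast

lemma scale_chain_restrict:
  assumes "x \<in> X"
    and closed: "\<And>a b. a \<in> X \<Longrightarrow> b \<in> Y \<Longrightarrow> d a b < s \<Longrightarrow> b \<in> X"
    and "scale_chain d Y s m x y"
  shows "scale_chain d X s m x y"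
proof -
  obtain p where p0: "p 0 = x" and pm: "p m = y" and pY: "\<forall>i\<le>m. p i \<in> Y"
    and steps: "\<forall>i<m. d (p i) (p (Suc i)) < s"
    using assms(3) unfolding scale_chain_def by blast
  have "p i \<in> X" if "i \<le> m" for i
    using that
  proof (induction i)
    case 0
    then show ?case using p0 \<open>x \<in> X\<close> by simp
  next
    case (Suc i)
    then show ?case using closed pY steps by simp
  qed
  then show ?thesis
    unfolding scale_chain_def using p0 pm steps by blast
qed

lemma scale_chain_end_mem:
  assumes "scale_chain d X s m x y"
  shows "y \<in> X"
  using assms unfolding scale_chain_def by auto

lemma gr_restrict:
  assumes "X \<subseteq> Y" and "x \<in> X"
    and "\<And>a b. a \<in> X \<Longrightarrow> b \<in> Y \<Longrightarrow> d a b < s \<Longrightarrow> b \<in> X"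
  shows "gr d Y s x = gr d X s x"
proof -
  have "chain_ball d Y s x n = chain_ball d X s x n" for n
  proof
    show "chain_ball d Y s x n \<subseteq> chain_ball d X s x n"
    proof
      fix y assume "y \<in> chain_ball d Y s x n"
      then have "scale_chain d X s n x y"
        using scale_chain_restrict[where X = X and Y = Y and d = d and s = s] assms(2,3) by (simp add: chain_ball_def)
      then show "y \<in> chain_ball d X s x n"
        using scale_chain_end_mem by (simp add: chain_ball_def)
    qed
    show "chain_ball d X s x n \<subseteq> chain_ball d Y s x n"
      unfolding chain_ball_def
      using scale_chain_mono[OF assms(1)] assms(1) by blast
  qed
  then show ?thesis
    unfolding gr_def by simp
qed

lemma (in group) generate_closed_under_short_steps:
  assumes "S \<subseteq> carrier G" and "{x \<in> carrier G. N x < s} \<subseteq> S"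
    and "a \<in> generate G S" and "b \<in> carrier G" and "norm_metric G N a b < s"
  shows "b \<in> generate G S"
proof -
  have a: "a \<in> carrier G"
    using generate_incl[OF assms(1)] assms(3) by blast
  have "inv a \<otimes> b \<in> generate G S"
    using assms a by (intro generate.incl) (auto simp: norm_metric_def)
  with assms(3) have "a \<otimes> (inv a \<otimes> b) \<in> generate G S"
    by (rule generate.eng)
  moreover have "a \<otimes> (inv a \<otimes> b) = b"
    using a assms(4) by (simp add: m_assoc[symmetric])
  ultimately show ?thesis
    by simp
qed

lemma proper_norm_finite_ball:
  assumes "proper_norm G N"
  shows "finite {x \<in> carrier G. N x < s}"
proof -
  have "finite {x \<in> carrier G. N x \<le> s}"
    using assms unfolding proper_norm_def by blast
  then show ?thesis
    by (rule finite_subset[rotated]) auto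
qed

theorem mainTheorem6:
  fixes G :: "('a, 'b) monoid_scheme" and N :: "'a \<Rightarrow> real" and f :: "nat \<Rightarrow> nat"
  assumes "group G"
    and "countable (carrier G)"
    and "proper_norm G N"
    and "\<And>H S. finite S \<Longrightarrow> S \<subseteq> carrier G \<Longrightarrow> H = generate G S \<Longrightarrow>
            growth_type_at_most (norm_metric G N) H f"
  shows "growth_type_at_most (norm_metric G N) (carrier G) f"
  unfolding growth_type_at_most_def
proof (intro ballI allI impI)
  fix g s assume g: "g \<in> carrier G" and "(s::real) > 0"
  interpret group G by (rule assms(1))
  define S where "S = insert g {x \<in> carrier G. N x < s}"
  define H where "H = generate G S"
  have S: "finite S" "S \<subseteq> carrier G"
    using proper_norm_finite_ball[OF assms(3)] g by (auto simp: S_def)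
  have H: "H \<subseteq> carrier G" "g \<in> H"
    using generate_incl[OF S(2)] generate.incl[of g S G] by (auto simp: H_def S_def)
  have "gr (norm_metric G N) (carrier G) s g = gr (norm_metric G N) H s g"
    using H generate_closed_under_short_steps[OF S(2), of N s]
    by (intro gr_restrict) (auto simp: H_def S_def)
  then show "dominated (gr (norm_metric G N) (carrier G) s g) f"
    using assms(4)[OF S H_def] H(2) \<open>s > 0\<close> unfolding growth_type_at_most_def by simp
qed

end
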